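(* Under the hypotheses of the real single-interference setting in the context (with $N\ge2$, $\|h_0\|=\|h_1\|=1$, $h_0^{\sf T}h_1=\sin\tau$, $\tau\in(-\pi/2,\pi/2)$, $\sigma_0^2,\sigma_1^2,\sigma_n^2>0$, $c_1\in[-\sigma_0\sigma_1,\sigma_0\sigma_1]$), let $\delta:=\sigma_n^2\tan\tau-c_1\cos\tau$. Then \[ \mathrm{MSE}_{\rm MVDR}=\frac{\sigma_n^2(\sigma_1^2+\sigma_n^2)+|c_1|^2\cos^2\tau}{\sigma_1^2\cos^2\tau+\sigma_n^2},\quad \mathrm{MSE}_{\rm ZF}=\sigma_n^2(\tan^2\tau+1), \] \[ \mathrm{MSE}_{\rm MMSE\text{-}DR}=\frac{\sigma_n^2(\sigma_1^2+\sigma_n^2)}{\sigma_1^2\cos^2\tau+\sigma_n^2}=\mathrm{MSE}_{\rm MVDR}-\frac{|c_1|^2\cos^2\tau}{\sigma_1^2\cos^2\tau+\sigma_n^2}=\mathrm{MSE}_{\rm ZF}-\frac{\sigma_n^4\tan^2\tau}{\sigma_1^2\cos^2\tau+\sigma_n^2}. \] If $\delta=0$, then $\mathrm{MSE}(\lambda)=\mathrm{MSE}_{\rm ZF}=\mathrm{MSE}_{\rm MVDR}$ for all $\lambda\ge0$. If $\delta\ne0$, then with $\gamma:=\sigma_n^2\tan\tau/\delta$, \[ \mathrm{MSE}_{\rm RZF}=\begin{cases}\mathrm{MSE}_{\rm ZF}, & \gamma\le0,\\ \mathrm{MSE}_{\rm MMSE\text{-}DR}, & \gamma\in(0,1),\\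 \mathrm{MSE}_{\rm MVDR}, & \gamma\ge1.\end{cases} \]
   Context: Real-valued single-interference model: $y(k)=s_0(k)h_0+s_1(k)h_1+n(k)\in\mathbb{R}^N$, with real zero-mean jointly weakly stationary signals $s_0,s_1$, $\sigma_j^2:=E[s_j(k)^2]$, $c_1:=E[s_0(k)s_1(k)]$, and real zero-mean noise $n(k)\sim\mathcal{N}(0,\sigma_n^2I)$ uncorrelated with the signals. $R:=E[y(k)y(k)^{\sf T}]$. The MSE of $w$ is $J_{\rm MSE}(w):=E[(w^{\sf T}y(k)-s_0(k))^2]$. Beamformers: RZF $w_{\rm RZF}(\lambda):=R_\lambda^{-1}h_0/(h_0^{\sf T}R_\lambda^{-1}h_0)$ with $R_\lambda:=R+\lambda h_1h_1^{\sf T}$, $\lambda\ge0$; MVDR $w_{\rm MVDR}:=w_{\rm RZF}(0)$; ZF $w_{\rm ZF}:=R^{-1}H(H^{\sf T}R^{-1}H)^{-1}e_1$ with $H=[h_0\ h_1]$, $e_1=[1,0]^{\sf T}$; MMSE-DR $w_{\rm MMSE\text{-}DR}:=\widetilde R^{-1}h_0/(h_0^{\sf T}\widetilde R^{-1}h_0)$ with $\widetilde R:=\sigma_n^2I+\sigma_1^2h_1h_1^{\sf T}$. $\mathrm{MSE}(\lambda):=J_{\rm MSE}(w_{\rm RZF}(\lambda))$, $\mathrm{MSE}_{\rm RZF}:=\inf_{\lambda\ge0}\mathrm{MSE}(\lambda)$, and $\mathrm{MSE}_{X}:=J_{\rm MSE}(w_X)$ for $X\in\{\rm MVDR,ZF,MMSE\text{-}DR\}$.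 *)

theory Defs
  imports "HOL-Analysis.Analysis"
begin

text \<open>Real single-interference model y(k) = s0(k) h0 + s1(k) h1 + n(k) in R^N.
  All quantities below are the second-moment expressions determined by the model:
  s2_0 = sigma_0^2 = E[s0^2], s2_1 = sigma_1^2 = E[s1^2], c1 = E[s0 s1],
  sn2 = sigma_n^2 (noise covariance sn2 * I, noise uncorrelated with the signals).\<close>

definition outer :: "real ^ 'n \<Rightarrow> real ^ 'n \<Rightarrow> real ^ 'n ^ 'n" where
  "outer a b = (\<chi> i j. a $ i * b $ j)"

text \<open>R = E[y y^T]\<close>
definition Rcov :: "real ^ 'n \<Rightarrow> real ^ 'n \<Rightarrow> real \<Rightarrow> real \<Rightarrow> real \<Rightarrow> real \<Rightarrow> real ^ 'n ^ 'n" where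
  "Rcov h0 h1 s2_0 s2_1 c1 sn2 =
     s2_0 *\<^sub>R outer h0 h0 + s2_1 *\<^sub>R outer h1 h1 + c1 *\<^sub>R (outer h0 h1 + outer h1 h0)
     + sn2 *\<^sub>R mat 1"

text \<open>J_MSE(w) = E[(w^T y - s0)^2] = w^T R w - 2 w^T E[y s0] + E[s0^2],
  with E[y s0] = sigma_0^2 h0 + c1 h1.\<close>
definition Jmse :: "real ^ 'n \<Rightarrow> real ^ 'n \<Rightarrow> real \<Rightarrow> real \<Rightarrow> real \<Rightarrow> real \<Rightarrow> real ^ 'n \<Rightarrow> real" where
  "Jmse h0 h1 s2_0 s2_1 c1 sn2 w =
     w \<bullet> (Rcov h0 h1 s2_0 s2_1 c1 sn2 *v w) - 2 * (w \<bullet> (s2_0 *\<^sub>R h0 + c1 *\<^sub>R h1)) + s2_0"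

definition dless :: "real ^ 'n ^ 'n \<Rightarrow> real ^ 'n \<Rightarrow> real ^ 'n" where
  "dless M h0 = (1 / (h0 \<bullet> (matrix_inv M *v h0))) *\<^sub>R (matrix_inv M *v h0)"

definition w_RZF :: "real ^ 'n \<Rightarrow> real ^ 'n \<Rightarrow> real \<Rightarrow> real \<Rightarrow> real \<Rightarrow> real \<Rightarrow> real \<Rightarrow> real ^ 'n" where
  "w_RZF h0 h1 s2_0 s2_1 c1 sn2 lam =
     dless (Rcov h0 h1 s2_0 s2_1 c1 sn2 + lam *\<^sub>R outer h1 h1) h0"

definition w_MVDR :: "real ^ 'n \<Rightarrow> real ^ 'n \<Rightarrow> real \<Rightarrow> real \<Rightarrow> real \<Rightarrow> real \<Rightarrow> real ^ 'n" where
  "w_MVDR h0 h1 s2_0 s2_1 c1 sn2 = w_RZF h0 h1 s2_0 s2_1 c1 sn2 0"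

text \<open>H = [h0 h1] (N x 2), e1 = [1,0]^T; in the numeral type 2 the column indices are 1 and 2 (= 0).\<close>
definition Hmat :: "real ^ 'n \<Rightarrow> real ^ 'n \<Rightarrow> real ^ 2 ^ 'n" where
  "Hmat h0 h1 = (\<chi> i j. if j = 1 then h0 $ i else h1 $ i)"

definition e1 :: "real ^ 2" where
  "e1 = (\<chi> j. if j = 1 then 1 else 0)"

definition w_ZF :: "real ^ 'n \<Rightarrow> real ^ 'n \<Rightarrow> real \<Rightarrow> real \<Rightarrow> real \<Rightarrow> real \<Rightarrow> real ^ 'n" where
  "w_ZF h0 h1 s2_0 s2_1 c1 sn2 =
     (let Ri = matrix_inv (Rcov h0 h1 s2_0 s2_1 c1 sn2); H = Hmat h0 h1
      in Ri ** H ** matrix_inv (transpose H ** Ri ** H) *v e1)"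

definition w_MMSE_DR :: "real ^ 'n \<Rightarrow> real ^ 'n \<Rightarrow> real \<Rightarrow> real \<Rightarrow> real ^ 'n" where
  "w_MMSE_DR h0 h1 s2_1 sn2 = dless (sn2 *\<^sub>R mat 1 + s2_1 *\<^sub>R outer h1 h1) h0"

definition MSE :: "real ^ 'n \<Rightarrow> real ^ 'n \<Rightarrow> real \<Rightarrow> real \<Rightarrow> real \<Rightarrow> real \<Rightarrow> real \<Rightarrow> real" where
  "MSE h0 h1 s2_0 s2_1 c1 sn2 lam =
     Jmse h0 h1 s2_0 s2_1 c1 sn2 (w_RZF h0 h1 s2_0 s2_1 c1 sn2 lam)"

definition MSE_RZF :: "real ^ 'n \<Rightarrow> real ^ 'n \<Rightarrow> real \<Rightarrow> real \<Rightarrow> real \<Rightarrow> real \<Rightarrow> real" where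
  "MSE_RZF h0 h1 s2_0 s2_1 c1 sn2 = (INF lam\<in>{0..}. MSE h0 h1 s2_0 s2_1 c1 sn2 lam)"

definition MSE_MVDR :: "real ^ 'n \<Rightarrow> real ^ 'n \<Rightarrow> real \<Rightarrow> real \<Rightarrow> real \<Rightarrow> real \<Rightarrow> real" where
  "MSE_MVDR h0 h1 s2_0 s2_1 c1 sn2 =
     Jmse h0 h1 s2_0 s2_1 c1 sn2 (w_MVDR h0 h1 s2_0 s2_1 c1 sn2)"

definition MSE_ZF :: "real ^ 'n \<Rightarrow> real ^ 'n \<Rightarrow> real \<Rightarrow> real \<Rightarrow> real \<Rightarrow> real \<Rightarrow> real" where
  "MSE_ZF h0 h1 s2_0 s2_1 c1 sn2 =
     Jmse h0 h1 s2_0 s2_1 c1 sn2 (w_ZF h0 h1 s2_0 s2_1 c1 sn2)"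

definition MSE_MMSE_DR :: "real ^ 'n \<Rightarrow> real ^ 'n \<Rightarrow> real \<Rightarrow> real \<Rightarrow> real \<Rightarrow> real \<Rightarrow> real" where
  "MSE_MMSE_DR h0 h1 s2_0 s2_1 c1 sn2 =
     Jmse h0 h1 s2_0 s2_1 c1 sn2 (w_MMSE_DR h0 h1 s2_1 sn2)"

end

theory Submission
  imports Defs
begin

text \<open>All beamformers in question are distortionless (w \<bullet> h0 = 1) and lie in span h0 h1, since
  R + lam h1 h1^T is sn times the identity plus a map into that span. For such w the MSE depends
  only on the leakage a = w \<bullet> h1 and is a convex quadratic in a, minimal at the MMSE-DR leakage
  sn s / D (s = sin tau, c = cos tau, D = s1 c^2 + sn). The ZF leakage is 0, the MVDR leakage is
  K / D with K = sn s - c1 c^2 = c delta, and the RZF leakage is rho K / D, where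
  rho = D / (D + lam c^2) sweeps (0, 1]. So the best RZF beamformer takes rho as close as possible
  to gamma = sn s / K, which yields the three regimes.\<close>

definition posdef :: "real ^ 'n ^ 'n \<Rightarrow> bool" where
  "posdef M \<longleftrightarrow> (\<forall>x. x \<noteq> 0 \<longrightarrow> 0 < x \<bullet> (M *v x))"

lemma matrix_inv_mult:
  fixes M :: "real ^ 'n ^ 'n"
  assumes "invertible M"
  shows "M ** matrix_inv M = mat 1" "matrix_inv M ** M = mat 1"
proof -
  have "\<exists>M'. M ** M' = mat 1 \<and> M' ** M = mat 1"
    using assms unfolding invertible_def by blast
  from someI_ex[OF this] show "M ** matrix_inv M = mat 1" "matrix_inv M ** M = mat 1"
    unfolding matrix_inv_def by auto
qed

lemma matrix_inv_solves:
  fixes M :: "real ^ 'n ^ 'n"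
  assumes "invertible M"
  shows "M *v (matrix_inv M *v b) = b"
  by (simp add: matrix_vector_mul_assoc matrix_inv_mult[OF assms])

lemma posdef_imp_invertible:
  fixes M :: "real ^ 'n ^ 'n"
  assumes "posdef M"
  shows "invertible M"
proof -
  have "x = 0" if "M *v x = 0" for x
    using assms that unfolding posdef_def by force
  then show ?thesis
    using invertible_left_inverse matrix_left_invertible_ker by blast
qed

lemma posdef_matrix_inv:
  fixes M :: "real ^ 'n ^ 'n"
  assumes "posdef M"
  shows "posdef (matrix_inv M)"
  unfolding posdef_def
proof (intro allI impI)
  fix y :: "real ^ 'n"
  assume "y \<noteq> 0"
  define x where "x = matrix_inv M *v y"
  have Mx: "M *v x = y"
    unfolding x_def by (rule matrix_inv_solves[OF posdef_imp_invertible[OF assms]])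
  with \<open>y \<noteq> 0\<close> have "x \<noteq> 0" by auto
  with assms have "0 < x \<bullet> (M *v x)" unfolding posdef_def by blast
  then show "0 < y \<bullet> (matrix_inv M *v y)"
    by (simp add: Mx x_def[symmetric] inner_commute)
qed

lemma posdef_congruence:
  fixes M :: "real ^ 'n ^ 'n" and H :: "real ^ 'm ^ 'n"
  assumes "posdef M" and "\<And>x. H *v x = 0 \<Longrightarrow> x = 0"
  shows "posdef (transpose H ** M ** H)"
  unfolding posdef_def
proof (intro allI impI)
  fix x :: "real ^ 'm"
  assume "x \<noteq> 0"
  have "x \<bullet> ((transpose H ** M ** H) *v x) = (H *v x) \<bullet> (M *v (H *v x))"
    by (metis dot_lmul_matrix vector_transpose_matrix matrix_vector_mul_assoc)
  with assms \<open>x \<noteq> 0\<close> show "0 < x \<bullet> ((transpose H ** M ** H) *v x)"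
    unfolding posdef_def by metis
qed

lemma dless_inner:
  assumes "posdef M" and "h \<noteq> 0"
  shows "dless M h \<bullet> h = 1"
proof -
  have "0 < h \<bullet> (matrix_inv M *v h)"
    using assms posdef_matrix_inv unfolding posdef_def by blast
  then show ?thesis
    unfolding dless_def by (simp add: inner_commute)
qed

lemma matrix_dless:
  assumes "invertible M"
  shows "M *v dless M h = (1 / (h \<bullet> (matrix_inv M *v h))) *\<^sub>R h"
  unfolding dless_def
  by (simp add: matrix_vector_mult_scaleR matrix_inv_solves[OF assms])

lemma signal_covariance_psd:
  fixes \<sigma>0 \<sigma>1 c1 a b :: real
  assumes "\<bar>c1\<bar> \<le> \<sigma>0 * \<sigma>1"
  shows "0 \<le> \<sigma>0\<^sup>2 * a\<^sup>2 + \<sigma>1\<^sup>2 * b\<^sup>2 + 2 * c1 * a * b"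
proof -
  have "2 * (\<sigma>0 * \<sigma>1) * (\<bar>a\<bar> * \<bar>b\<bar>) \<le> \<sigma>0\<^sup>2 * a\<^sup>2 + \<sigma>1\<^sup>2 * b\<^sup>2"
    using zero_le_power2[of "\<sigma>0 * \<bar>a\<bar> - \<sigma>1 * \<bar>b\<bar>"]
    by (simp add: power2_eq_square algebra_simps)
  moreover have "- (c1 * a * b) \<le> \<bar>c1\<bar> * (\<bar>a\<bar> * \<bar>b\<bar>)"
    by (metis abs_ge_minus_self abs_mult mult.assoc)
  moreover have "\<bar>c1\<bar> * (\<bar>a\<bar> * \<bar>b\<bar>) \<le> (\<sigma>0 * \<sigma>1) * (\<bar>a\<bar> * \<bar>b\<bar>)"
    using assms by (simp add: mult_right_mono)
  ultimately show ?thesis by linarith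
qed

lemma outer_mult_vector: "outer a b *v x = (b \<bullet> x) *\<^sub>R a"
  by (simp add: outer_def matrix_vector_mult_def inner_vec_def vec_eq_iff sum_distrib_left mult_ac)

lemma Rcov_plus_outer_mult_vector:
  "(Rcov h0 h1 s0 s1 c1 sn + lam *\<^sub>R outer h1 h1) *v x =
     sn *\<^sub>R x + (s0 * (h0 \<bullet> x) + c1 * (h1 \<bullet> x)) *\<^sub>R h0
       + ((s1 + lam) * (h1 \<bullet> x) + c1 * (h0 \<bullet> x)) *\<^sub>R h1"
  by (simp add: Rcov_def matrix_vector_mult_add_rdistrib outer_mult_vector
        flip: scaleR_matrix_vector_assoc)
     (simp add: algebra_simps)

lemma posdef_Rcov_plus_outer:
  fixes h0 h1 :: "real ^ 'n"
  assumes "sn > 0" and "lam \<ge> 0" and "\<And>a b. 0 \<le> s0 * a\<^sup>2 + s1 * b\<^sup>2 + 2 * c1 * a * b"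
  shows "posdef (Rcov h0 h1 s0 s1 c1 sn + lam *\<^sub>R outer h1 h1)"
  unfolding posdef_def
proof (intro allI impI)
  fix x :: "real ^ 'n"
  assume "x \<noteq> 0"
  have "x \<bullet> ((Rcov h0 h1 s0 s1 c1 sn + lam *\<^sub>R outer h1 h1) *v x)
      = sn * (x \<bullet> x) + lam * (h1 \<bullet> x)\<^sup>2
        + (s0 * (h0 \<bullet> x)\<^sup>2 + s1 * (h1 \<bullet> x)\<^sup>2 + 2 * c1 * (h0 \<bullet> x) * (h1 \<bullet> x))"
    unfolding Rcov_plus_outer_mult_vector
    by (simp add: inner_add_right inner_commute power2_eq_square algebra_simps)
  moreover have "0 < sn * (x \<bullet> x)" using \<open>sn > 0\<close> \<open>x \<noteq> 0\<close> by simp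
  ultimately show "0 < x \<bullet> ((Rcov h0 h1 s0 s1 c1 sn + lam *\<^sub>R outer h1 h1) *v x)"
    using \<open>lam \<ge> 0\<close> assms(3)[of "h0 \<bullet> x" "h1 \<bullet> x"] by (simp add: add_pos_nonneg)
qed

lemma Rcov_plus_outer_preimage_span:
  assumes "sn \<noteq> 0"
    and "(Rcov h0 h1 s0 s1 c1 sn + lam *\<^sub>R outer h1 h1) *v u = p0 *\<^sub>R h0 + q0 *\<^sub>R h1"
  shows "\<exists>p q. u = p *\<^sub>R h0 + q *\<^sub>R h1"
proof -
  let ?p = "p0 - (s0 * (h0 \<bullet> u) + c1 * (h1 \<bullet> u))"
  let ?q = "q0 - ((s1 + lam) * (h1 \<bullet> u) + c1 * (h0 \<bullet> u))"
  have "sn *\<^sub>R u = ?p *\<^sub>R h0 + ?q *\<^sub>R h1"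
    using assms(2) unfolding Rcov_plus_outer_mult_vector by (simp add: algebra_simps)
  then have "(1 / sn) *\<^sub>R (sn *\<^sub>R u) = (?p / sn) *\<^sub>R h0 + (?q / sn) *\<^sub>R h1"
    by (simp add: scaleR_add_right)
  then show ?thesis using \<open>sn \<noteq> 0\<close> by auto
qed

lemma dless_Rcov_plus_outer:
  fixes h0 h1 :: "real ^ 'n"
  assumes h00: "h0 \<bullet> h0 = 1" and h11: "h1 \<bullet> h1 = 1" and h01: "h0 \<bullet> h1 = s"
    and "sn > 0" and "lam \<ge> 0" and "\<And>a b. 0 \<le> s0 * a\<^sup>2 + s1 * b\<^sup>2 + 2 * c1 * a * b"
  defines "w \<equiv> dless (Rcov h0 h1 s0 s1 c1 sn + lam *\<^sub>R outer h1 h1) h0"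
  shows "w \<bullet> h0 = 1" and "\<exists>p q. w = p *\<^sub>R h0 + q *\<^sub>R h1"
    and "(w \<bullet> h1) * (sn + (s1 + lam) * (1 - s\<^sup>2)) = sn * s - c1 * (1 - s\<^sup>2)"
proof -
  let ?M = "Rcov h0 h1 s0 s1 c1 sn + lam *\<^sub>R outer h1 h1"
  have M: "posdef ?M" using posdef_Rcov_plus_outer assms(4-6) by blast
  have "h0 \<noteq> 0" using h00 by auto
  with M show w0: "w \<bullet> h0 = 1" unfolding w_def by (rule dless_inner)
  obtain \<mu> where Mw: "?M *v w = \<mu> *\<^sub>R h0"
    unfolding w_def using matrix_dless[OF posdef_imp_invertible[OF M]] by blast
  then have "?M *v w = \<mu> *\<^sub>R h0 + 0 *\<^sub>R h1" by simp
  then show "\<exists>p q. w = p *\<^sub>R h0 + q *\<^sub>R h1"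
    using Rcov_plus_outer_preimage_span \<open>sn > 0\<close> by (metis less_irrefl)
  define b where "b = w \<bullet> h1"
  have "h1 \<bullet> (?M *v w) = s * (h0 \<bullet> (?M *v w))"
    using Mw h00 h01 by (simp add: inner_commute)
  then have eq: "sn * b + (s0 + c1 * b) * s + ((s1 + lam) * b + c1)
      = s * (sn + (s0 + c1 * b) + ((s1 + lam) * b + c1) * s)"
    unfolding Rcov_plus_outer_mult_vector b_def
    using w0 by (simp add: inner_add_right h00 h11 h01 inner_commute)
  have "b * (sn + (s1 + lam) * (1 - s\<^sup>2)) - (sn * s - c1 * (1 - s\<^sup>2))
      = (sn * b + (s0 + c1 * b) * s + ((s1 + lam) * b + c1))
        - s * (sn + (s0 + c1 * b) + ((s1 + lam) * b + c1) * s)"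
    by (simp add: algebra_simps power2_eq_square)
  with eq show "(w \<bullet> h1) * (sn + (s1 + lam) * (1 - s\<^sup>2)) = sn * s - c1 * (1 - s\<^sup>2)"
    unfolding b_def by simp
qed

lemma Jmse_distortionless:
  assumes "w \<bullet> h0 = 1"
  shows "Jmse h0 h1 s0 s1 c1 sn w = sn * (w \<bullet> w) + s1 * (w \<bullet> h1)\<^sup>2"
proof -
  have "Rcov h0 h1 s0 s1 c1 sn *v w = (Rcov h0 h1 s0 s1 c1 sn + 0 *\<^sub>R outer h1 h1) *v w"
    by simp
  then show ?thesis
    unfolding Jmse_def Rcov_plus_outer_mult_vector using assms
    by (simp add: inner_add_right inner_commute power2_eq_square algebra_simps)
qed

lemma inner_self_distortionless_span:
  fixes h0 h1 w :: "real ^ 'n"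
  assumes h00: "h0 \<bullet> h0 = 1" and h11: "h1 \<bullet> h1 = 1" and h01: "h0 \<bullet> h1 = s"
    and "s\<^sup>2 < 1" and w0: "w \<bullet> h0 = 1" and w: "w = p *\<^sub>R h0 + q *\<^sub>R h1"
  shows "w \<bullet> w = (1 - 2 * s * (w \<bullet> h1) + (w \<bullet> h1)\<^sup>2) / (1 - s\<^sup>2)"
proof -
  define a where "a = w \<bullet> h1"
  have h10: "h1 \<bullet> h0 = s" using h01 by (simp add: inner_commute)
  have p: "p + q * s = 1" using w0 unfolding w by (simp add: inner_add_left h00 h10)
  have a: "p * s + q = a" unfolding a_def w by (simp add: inner_add_left h11 h01)
  have "a - s = (p * s + q) - (p + q * s) * s" using p a by simp
  then have "q * (1 - s\<^sup>2) = a - s" by (simp add: algebra_simps power2_eq_square)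
  then have q: "q = (a - s) / (1 - s\<^sup>2)" using \<open>s\<^sup>2 < 1\<close> by (simp add: field_simps)
  have "w \<bullet> w = p + q * a"
    using w0 unfolding a_def by (subst (2) w) (simp add: inner_add_right)
  also have "\<dots> = 1 + q * (a - s)" using p by (simp add: algebra_simps)
  also have "\<dots> = ((1 - s\<^sup>2) + (a - s)\<^sup>2) / (1 - s\<^sup>2)"
    using \<open>s\<^sup>2 < 1\<close> by (simp add: q power2_eq_square field_simps)
  also have "(1 - s\<^sup>2) + (a - s)\<^sup>2 = 1 - 2 * s * a + a\<^sup>2"
    by (simp add: power2_eq_square algebra_simps)
  finally show ?thesis unfolding a_def .
qed

text \<open>Mean-square error of a distortionless beamformer w in span h0 h1, as a function of its
  leakage a = w \<bullet> h1 towards the interferer; here s = h0 \<bullet> h1.\<close>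
definition leakage_mse :: "real \<Rightarrow> real \<Rightarrow> real \<Rightarrow> real \<Rightarrow> real" where
  "leakage_mse s1 sn s a = s1 * a\<^sup>2 + sn * (1 - 2 * s * a + a\<^sup>2) / (1 - s\<^sup>2)"

lemma Jmse_eq_leakage_mse:
  fixes h0 h1 w :: "real ^ 'n"
  assumes "h0 \<bullet> h0 = 1" and "h1 \<bullet> h1 = 1" and "h0 \<bullet> h1 = s" and "s\<^sup>2 < 1"
    and "w \<bullet> h0 = 1" and "\<exists>p q. w = p *\<^sub>R h0 + q *\<^sub>R h1"
  shows "Jmse h0 h1 s0 s1 c1 sn w = leakage_mse s1 sn s (w \<bullet> h1)"
  using assms inner_self_distortionless_span[OF assms(1-5)]
  by (auto simp: Jmse_distortionless leakage_mse_def)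

lemma Jmse_dless_Rcov_plus_outer:
  fixes h0 h1 :: "real ^ 'n"
  assumes "h0 \<bullet> h0 = 1" and "h1 \<bullet> h1 = 1" and "h0 \<bullet> h1 = s" and "s\<^sup>2 < 1"
    and "sn > 0" and "lam \<ge> 0" and psd: "\<And>a b. 0 \<le> s0' * a\<^sup>2 + s1' * b\<^sup>2 + 2 * c1' * a * b"
  shows "Jmse h0 h1 s0 s1 c1 sn (dless (Rcov h0 h1 s0' s1' c1' sn + lam *\<^sub>R outer h1 h1) h0)
      = leakage_mse s1 sn s ((sn * s - c1' * (1 - s\<^sup>2)) / (sn + (s1' + lam) * (1 - s\<^sup>2)))"
proof -
  define w where "w = dless (Rcov h0 h1 s0' s1' c1' sn + lam *\<^sub>R outer h1 h1) h0"
  note w = dless_Rcov_plus_outer[OF assms(1-3,5,6) psd, folded w_def]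
  have "0 \<le> s1'" using psd[of 0 1] by simp
  then have "0 < sn + (s1' + lam) * (1 - s\<^sup>2)"
    using assms(4-6) by (simp add: add_pos_nonneg)
  then have "w \<bullet> h1 = (sn * s - c1' * (1 - s\<^sup>2)) / (sn + (s1' + lam) * (1 - s\<^sup>2))"
    using w(3) by (simp add: field_simps)
  then show ?thesis
    unfolding w_def[symmetric] using Jmse_eq_leakage_mse[OF assms(1-4) w(1,2)] by simp
qed

lemma Hmat_mult_vector: "Hmat h0 h1 *v x = x $ 1 *\<^sub>R h0 + x $ 2 *\<^sub>R h1"
  by (simp add: Hmat_def matrix_vector_mult_def vec_eq_iff sum_2 mult.commute)

lemma transpose_Hmat_mult_vector:
  "(transpose (Hmat h0 h1) *v z) $ 1 = h0 \<bullet> z" "(transpose (Hmat h0 h1) *v z) $ 2 = h1 \<bullet> z"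
  by (simp_all add: Hmat_def matrix_vector_mult_def transpose_def inner_vec_def)

lemma Hmat_injective:
  fixes h0 h1 :: "real ^ 'n"
  assumes h00: "h0 \<bullet> h0 = 1" and h11: "h1 \<bullet> h1 = 1" and h01: "h0 \<bullet> h1 = s" and "s\<^sup>2 < 1"
    and "Hmat h0 h1 *v x = 0"
  shows "x = 0"
proof -
  have h10: "h1 \<bullet> h0 = s" using h01 by (simp add: inner_commute)
  have "h0 \<bullet> (Hmat h0 h1 *v x) = 0" "h1 \<bullet> (Hmat h0 h1 *v x) = 0" using assms(5) by simp_all
  then have x1: "x $ 1 = - (s * x $ 2)" and "s * x $ 1 + x $ 2 = 0"
    unfolding Hmat_mult_vector by (simp_all add: inner_add_right h00 h11 h01 h10 mult.commute)
  then have "(1 - s\<^sup>2) * x $ 2 = 0" by (simp add: algebra_simps power2_eq_square)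
  with \<open>s\<^sup>2 < 1\<close> x1 have "x $ 1 = 0" "x $ 2 = 0" by simp_all
  then show "x = 0" by (simp add: vec_eq_iff forall_2)
qed

lemma w_ZF_constraints:
  fixes h0 h1 :: "real ^ 'n"
  assumes "h0 \<bullet> h0 = 1" and "h1 \<bullet> h1 = 1" and "h0 \<bullet> h1 = s" and "s\<^sup>2 < 1"
    and "sn > 0" and "\<And>a b. 0 \<le> s0 * a\<^sup>2 + s1 * b\<^sup>2 + 2 * c1 * a * b"
  defines "w \<equiv> w_ZF h0 h1 s0 s1 c1 sn"
  shows "w \<bullet> h0 = 1" and "w \<bullet> h1 = 0" and "\<exists>p q. w = p *\<^sub>R h0 + q *\<^sub>R h1"
proof -
  let ?R = "Rcov h0 h1 s0 s1 c1 sn"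
  let ?H = "Hmat h0 h1"
  let ?G = "transpose ?H ** matrix_inv ?R ** ?H"
  have R: "posdef (?R + 0 *\<^sub>R outer h1 h1)"
    using posdef_Rcov_plus_outer assms(5,6) by blast
  then have "posdef ?R" by simp
  then have "posdef ?G"
    using posdef_congruence[OF posdef_matrix_inv] Hmat_injective[OF assms(1-4)] by blast
  then have Gv: "?G *v (matrix_inv ?G *v e1) = e1"
    by (intro matrix_inv_solves posdef_imp_invertible)
  define v where "v = matrix_inv ?G *v e1"
  have wv: "w = matrix_inv ?R *v (?H *v v)"
    unfolding w_def w_ZF_def v_def Let_def by (simp add: matrix_vector_mul_assoc matrix_mul_assoc)
  have "transpose ?H *v w = e1"
    using Gv unfolding wv v_def by (simp add: matrix_vector_mul_assoc matrix_mul_assoc)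
  then show "w \<bullet> h0 = 1" "w \<bullet> h1 = 0"
    using transpose_Hmat_mult_vector[of h0 h1 w] by (simp_all add: e1_def inner_commute)
  have "(?R + 0 *\<^sub>R outer h1 h1) *v w = v $ 1 *\<^sub>R h0 + v $ 2 *\<^sub>R h1"
    unfolding wv using matrix_inv_solves[OF posdef_imp_invertible[OF R]]
    by (simp add: Hmat_mult_vector)
  then show "\<exists>p q. w = p *\<^sub>R h0 + q *\<^sub>R h1"
    using Rcov_plus_outer_preimage_span \<open>sn > 0\<close> by (metis less_irrefl)
qed

lemma MSE_eq_leakage_mse:
  fixes h0 h1 :: "real ^ 'n"
  assumes "h0 \<bullet> h0 = 1" and "h1 \<bullet> h1 = 1" and "h0 \<bullet> h1 = s" and "s\<^sup>2 < 1"
    and "sn > 0" and "\<And>a b. 0 \<le> s0 * a\<^sup>2 + s1 * b\<^sup>2 + 2 * c1 * a * b" and "lam \<ge> 0"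
  shows "MSE h0 h1 s0 s1 c1 sn lam
      = leakage_mse s1 sn s ((sn * s - c1 * (1 - s\<^sup>2)) / (sn + (s1 + lam) * (1 - s\<^sup>2)))"
  unfolding MSE_def w_RZF_def using Jmse_dless_Rcov_plus_outer assms by blast

lemma MSE_ZF_eq_leakage_mse:
  fixes h0 h1 :: "real ^ 'n"
  assumes "h0 \<bullet> h0 = 1" and "h1 \<bullet> h1 = 1" and "h0 \<bullet> h1 = s" and "s\<^sup>2 < 1"
    and "sn > 0" and "\<And>a b. 0 \<le> s0 * a\<^sup>2 + s1 * b\<^sup>2 + 2 * c1 * a * b"
  shows "MSE_ZF h0 h1 s0 s1 c1 sn = leakage_mse s1 sn s 0"
  using Jmse_eq_leakage_mse[OF assms(1-4)] w_ZF_constraints[OF assms] by (simp add: MSE_ZF_def)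

text \<open>The MMSE-DR beamformer is the MVDR beamformer of a model without desired-signal
  power and correlation.\<close>
lemma MSE_MMSE_DR_eq_leakage_mse:
  fixes h0 h1 :: "real ^ 'n"
  assumes "h0 \<bullet> h0 = 1" and "h1 \<bullet> h1 = 1" and "h0 \<bullet> h1 = s" and "s\<^sup>2 < 1"
    and "sn > 0" and "s1 \<ge> 0"
  shows "MSE_MMSE_DR h0 h1 s0 s1 c1 sn = leakage_mse s1 sn s (sn * s / (sn + s1 * (1 - s\<^sup>2)))"
proof -
  have "w_MMSE_DR h0 h1 s1 sn = dless (Rcov h0 h1 0 s1 0 sn + 0 *\<^sub>R outer h1 h1) h0"
    unfolding w_MMSE_DR_def Rcov_def by (simp add: add.commute)
  moreover have "0 \<le> 0 * a\<^sup>2 + s1 * b\<^sup>2 + 2 * 0 * a * b" for a b :: real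
    using \<open>s1 \<ge> 0\<close> by simp
  ultimately show ?thesis
    unfolding MSE_MMSE_DR_def using Jmse_dless_Rcov_plus_outer[OF assms(1-5) order_refl] by simp
qed

lemma INF_greaterThanAtMost_quadratic:
  fixes m E \<gamma> :: real
  assumes "E \<ge> 0"
  shows "(INF r\<in>{0<..1}. m + E * (r - \<gamma>)\<^sup>2) = m + E * (max 0 (min 1 \<gamma>) - \<gamma>)\<^sup>2"
proof (rule antisym)
  let ?g = "\<lambda>r. m + E * (r - \<gamma>)\<^sup>2" and ?r0 = "max 0 (min 1 \<gamma>)"
  have lower: "?g ?r0 \<le> ?g r" if "0 \<le> r" "r \<le> 1" for r
  proof -
    have "\<bar>?r0 - \<gamma>\<bar> \<le> \<bar>r - \<gamma>\<bar>" using that by (auto simp: max_def min_def)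
    then show ?thesis using assms by (simp add: abs_le_square_iff mult_left_mono)
  qed
  then show "?g ?r0 \<le> (INF r\<in>{0<..1}. ?g r)" by (intro cINF_greatest) auto
  have bdd: "bdd_below (?g ` {0<..1})" using lower by (intro bdd_belowI2[where m = "?g ?r0"]) auto
  show "(INF r\<in>{0<..1}. ?g r) \<le> ?g ?r0"
  proof (cases "\<gamma> \<le> 0")
    case True
    have "(?g \<longlongrightarrow> ?g 0) (at_right 0)" by (intro tendsto_intros)
    moreover have "\<forall>\<^sub>F r in at_right 0. (INF r\<in>{0<..1}. ?g r) \<le> ?g r"
      using eventually_at_right_real[OF zero_less_one]
      by eventually_elim (auto intro: cINF_lower[OF bdd])
    ultimately show ?thesis using True by (auto intro: tendsto_le[OF trivial_limit_at_right_real])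
  next
    case False
    then show ?thesis by (intro cINF_lower[OF bdd]) auto
  qed
qed

lemma image_ratio_atLeast_eq_greaterThanAtMost:
  fixes D q :: real
  assumes "D > 0" and "q > 0"
  shows "(\<lambda>lam. D / (D + lam * q)) ` {0..} = {0<..1}"
proof (intro equalityI subsetI)
  fix r assume "r \<in> (\<lambda>lam. D / (D + lam * q)) ` {0..}"
  then show "r \<in> {0<..1}" using assms by (auto simp: field_simps add_pos_nonneg)
next
  fix r :: real assume r: "r \<in> {0<..1}"
  let ?lam = "D * (1 - r) / (r * q)"
  have "D / (D + ?lam * q) = r" using r assms by (simp add: field_simps)
  moreover have "?lam \<ge> 0" using r assms by simp
  ultimately show "r \<in> (\<lambda>lam. D / (D + lam * q)) ` {0..}" by force
qed

lemma leakage_mse_completed_square: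
  assumes "s\<^sup>2 < 1" and "sn > 0" and "s1 \<ge> 0"
  defines "D \<equiv> sn + s1 * (1 - s\<^sup>2)"
  shows "leakage_mse s1 sn s a = sn * (s1 + sn) / D + D / (1 - s\<^sup>2) * (a - sn * s / D)\<^sup>2"
proof -
  define q where "q = 1 - s\<^sup>2"
  have "D > 0" unfolding D_def using assms(1-3) by (simp add: add_pos_nonneg)
  moreover have "q > 0" unfolding q_def using assms(1) by simp
  ultimately have "leakage_mse s1 sn s a = (q * D * s1 * a\<^sup>2 + sn * D * (1 - 2 * s * a + a\<^sup>2)) / (q * D)"
    and "sn * (s1 + sn) / D + D / q * (a - sn * s / D)\<^sup>2 = (q * sn * (s1 + sn) + (D * a - sn * s)\<^sup>2) / (q * D)"
    unfolding leakage_mse_def q_def[symmetric] by (simp_all add: field_simps power2_eq_square)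
  moreover have "q * D * s1 * a\<^sup>2 + sn * D * (1 - 2 * s * a + a\<^sup>2) = q * sn * (s1 + sn) + (D * a - sn * s)\<^sup>2"
    unfolding D_def q_def by (simp add: algebra_simps power2_eq_square)
  ultimately show ?thesis unfolding q_def by simp
qed

lemma INF_leakage_mse_RZF:
  assumes "s\<^sup>2 < 1" and "sn > 0" and "s1 \<ge> 0" and "K \<noteq> 0"
  defines "D \<equiv> sn + s1 * (1 - s\<^sup>2)" and "\<gamma> \<equiv> sn * s / K"
  shows "(INF lam\<in>{0..}. leakage_mse s1 sn s (K / (sn + (s1 + lam) * (1 - s\<^sup>2))))
       = leakage_mse s1 sn s (K / D * max 0 (min 1 \<gamma>))"
proof -
  define q where "q = 1 - s\<^sup>2"
  define E where "E = D / q * (K / D)\<^sup>2"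
  have q: "q > 0" unfolding q_def using assms(1) by simp
  have D: "D > 0" unfolding D_def using assms(1-3) by (simp add: add_pos_nonneg)
  have square: "leakage_mse s1 sn s (K / D * r) = sn * (s1 + sn) / D + E * (r - \<gamma>)\<^sup>2" for r
  proof -
    have "K / D * r - sn * s / D = K / D * (r - \<gamma>)"
      unfolding \<gamma>_def using assms(4) D by (simp add: field_simps)
    then have "(K / D * r - sn * s / D)\<^sup>2 = (K / D)\<^sup>2 * (r - \<gamma>)\<^sup>2"
      by (simp only: power_mult_distrib)
    then show ?thesis
      unfolding leakage_mse_completed_square[OF assms(1-3), folded D_def q_def] E_def
      by (simp add: mult.assoc)
  qed
  have "K / (sn + (s1 + lam) * (1 - s\<^sup>2)) = K / D * (D / (D + lam * q))" for lam
  proof -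
    have "sn + (s1 + lam) * (1 - s\<^sup>2) = D + lam * q" by (simp add: D_def q_def algebra_simps)
    then show ?thesis using D by simp
  qed
  then have "(INF lam\<in>{0..}. leakage_mse s1 sn s (K / (sn + (s1 + lam) * (1 - s\<^sup>2))))
      = (INF lam\<in>{0..}. leakage_mse s1 sn s (K / D * (D / (D + lam * q))))"
    by simp
  also have "\<dots> = (INF r\<in>(\<lambda>lam. D / (D + lam * q)) ` {0..}. leakage_mse s1 sn s (K / D * r))"
    by (simp add: image_image)
  also have "\<dots> = (INF r\<in>{0<..1}. sn * (s1 + sn) / D + E * (r - \<gamma>)\<^sup>2)"
    unfolding image_ratio_atLeast_eq_greaterThanAtMost[OF D q] square ..
  also have "\<dots> = leakage_mse s1 sn s (K / D * max 0 (min 1 \<gamma>))"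
    using D q unfolding square E_def by (intro INF_greaterThanAtMost_quadratic) simp
  finally show ?thesis .
qed

lemma leakage_mse_closed_forms:
  assumes sc: "s\<^sup>2 + c\<^sup>2 = 1" and "c > 0" and "sn > 0" and "s1 \<ge> 0"
  defines "D \<equiv> s1 * c\<^sup>2 + sn"
  shows "leakage_mse s1 sn s ((sn * s - c1 * c\<^sup>2) / D) = (sn * (s1 + sn) + \<bar>c1\<bar>\<^sup>2 * c\<^sup>2) / D"
    and "leakage_mse s1 sn s 0 = sn * ((s / c)\<^sup>2 + 1)"
    and "leakage_mse s1 sn s (sn * s / D) = sn * (s1 + sn) / D"
    and "sn * (s1 + sn) / D = sn * ((s / c)\<^sup>2 + 1) - sn\<^sup>2 * (s / c)\<^sup>2 / D"
proof -
  have q: "1 - s\<^sup>2 = c\<^sup>2" using sc by simp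
  have "c \<noteq> 0" using \<open>c > 0\<close> by simp
  have "c\<^sup>2 > 0" using \<open>c > 0\<close> by simp
  then have "s\<^sup>2 < 1" using q by linarith
  have "D > 0" unfolding D_def using \<open>sn > 0\<close> \<open>s1 \<ge> 0\<close> \<open>c\<^sup>2 > 0\<close>
    by (simp add: add_nonneg_pos)
  then have "D \<noteq> 0" by simp
  have "sn + s1 * c\<^sup>2 = D" unfolding D_def by simp
  note square = leakage_mse_completed_square[OF \<open>s\<^sup>2 < 1\<close> \<open>sn > 0\<close> \<open>s1 \<ge> 0\<close>,
      unfolded q, unfolded this]
  have "(sn * s - c1 * c\<^sup>2) / D - sn * s / D = - (c1 * c\<^sup>2 / D)" by (simp add: diff_divide_distrib)
  moreover have "D / c\<^sup>2 * (- (c1 * c\<^sup>2 / D))\<^sup>2 = \<bar>c1\<bar>\<^sup>2 * c\<^sup>2 / D"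
    using \<open>D \<noteq> 0\<close> \<open>c \<noteq> 0\<close> by (simp add: power2_eq_square field_simps)
  ultimately show "leakage_mse s1 sn s ((sn * s - c1 * c\<^sup>2) / D) = (sn * (s1 + sn) + \<bar>c1\<bar>\<^sup>2 * c\<^sup>2) / D"
    unfolding square by (simp add: add_divide_distrib)
  have "(s / c)\<^sup>2 + 1 = 1 / c\<^sup>2" using sc \<open>c \<noteq> 0\<close> by (simp add: field_simps power_divide)
  then show zf: "leakage_mse s1 sn s 0 = sn * ((s / c)\<^sup>2 + 1)" unfolding leakage_mse_def q by simp
  show "leakage_mse s1 sn s (sn * s / D) = sn * (s1 + sn) / D" unfolding square by simp
  have "D / c\<^sup>2 * (0 - sn * s / D)\<^sup>2 = sn\<^sup>2 * (s / c)\<^sup>2 / D"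
    using \<open>D \<noteq> 0\<close> \<open>c \<noteq> 0\<close> by (simp add: power2_eq_square field_simps)
  then show "sn * (s1 + sn) / D = sn * ((s / c)\<^sup>2 + 1) - sn\<^sup>2 * (s / c)\<^sup>2 / D"
    using square[of 0] zf by linarith
qed

lemma INF_leakage_mse_cases:
  assumes sc: "s\<^sup>2 + c\<^sup>2 = 1" and "c > 0" and "sn > 0" and "s1 \<ge> 0"
    and \<delta>: "sn * (s / c) - c1 * c \<noteq> 0"
  defines "D \<equiv> s1 * c\<^sup>2 + sn" and "K \<equiv> sn * s - c1 * c\<^sup>2"
    and "\<gamma> \<equiv> sn * (s / c) / (sn * (s / c) - c1 * c)"
  shows "(INF lam\<in>{0..}. leakage_mse s1 sn s (K / (sn + (s1 + lam) * c\<^sup>2)))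
      = (if \<gamma> \<le> 0 then leakage_mse s1 sn s 0
         else if \<gamma> < 1 then leakage_mse s1 sn s (sn * s / D)
         else leakage_mse s1 sn s (K / D))"
proof -
  have q: "1 - s\<^sup>2 = c\<^sup>2" using sc by simp
  have "c\<^sup>2 > 0" using \<open>c > 0\<close> by simp
  then have "s\<^sup>2 < 1" using q by linarith
  have K: "sn * (s / c) - c1 * c = K / c"
    unfolding K_def using \<open>c > 0\<close> by (simp add: field_simps power2_eq_square)
  with \<delta> have "K / c \<noteq> 0" by argo
  then have "K \<noteq> 0" by simp
  have "\<gamma> = sn * s / K" unfolding \<gamma>_def K using \<open>c > 0\<close> by simp
  then have "K / D * \<gamma> = sn * s / K * (K / D)" by simp
  also have "\<dots> = sn * s / D" using \<open>K \<noteq> 0\<close> by simp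
  finally have "K / D * \<gamma> = sn * s / D" .
  moreover have "sn + s1 * c\<^sup>2 = D" unfolding D_def by simp
  ultimately show ?thesis
    using INF_leakage_mse_RZF[OF \<open>s\<^sup>2 < 1\<close> \<open>sn > 0\<close> \<open>s1 \<ge> 0\<close> \<open>K \<noteq> 0\<close>]
    unfolding q \<open>\<gamma> = sn * s / K\<close>[symmetric] by (auto simp: max_def min_def)
qed

locale single_interference =
  fixes h0 h1 :: "real ^ 'n" and s c s0 s1 c1 sn :: real
  assumes h0_unit: "h0 \<bullet> h0 = 1" and h1_unit: "h1 \<bullet> h1 = 1" and h0_inner_h1: "h0 \<bullet> h1 = s"
    and sin_cos: "s\<^sup>2 + c\<^sup>2 = 1" and cos_pos: "c > 0" and noise_pos: "sn > 0"
    and signal_psd: "\<And>a b. 0 \<le> s0 * a\<^sup>2 + s1 * b\<^sup>2 + 2 * c1 * a * b"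
begin

lemma one_minus_sin_sq: "1 - s\<^sup>2 = c\<^sup>2"
  using sin_cos by simp

lemma sin_sq_less_1: "s\<^sup>2 < 1"
  using one_minus_sin_sq cos_pos by (metis diff_gt_0_iff_gt zero_less_power)

lemma interference_power_nonneg: "s1 \<ge> 0"
  using signal_psd[of 0 1] by simp

lemmas model = h0_unit h1_unit h0_inner_h1 sin_sq_less_1 noise_pos

lemma MSE_eq: "lam \<ge> 0 \<Longrightarrow>
    MSE h0 h1 s0 s1 c1 sn lam = leakage_mse s1 sn s ((sn * s - c1 * c\<^sup>2) / (sn + (s1 + lam) * c\<^sup>2))"
  using MSE_eq_leakage_mse[OF model signal_psd] unfolding one_minus_sin_sq .

lemmas closed_forms =
  leakage_mse_closed_forms[OF sin_cos cos_pos noise_pos interference_power_nonneg]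

lemma MSE_MVDR_closed_form:
  "MSE_MVDR h0 h1 s0 s1 c1 sn = (sn * (s1 + sn) + \<bar>c1\<bar>\<^sup>2 * c\<^sup>2) / (s1 * c\<^sup>2 + sn)"
  using MSE_eq[of 0] closed_forms(1) by (simp add: MSE_MVDR_def w_MVDR_def MSE_def add.commute)

lemma MSE_ZF_closed_form: "MSE_ZF h0 h1 s0 s1 c1 sn = sn * ((s / c)\<^sup>2 + 1)"
  using MSE_ZF_eq_leakage_mse[OF model signal_psd] closed_forms(2) by simp

lemma MSE_MMSE_DR_closed_form: "MSE_MMSE_DR h0 h1 s0 s1 c1 sn = sn * (s1 + sn) / (s1 * c\<^sup>2 + sn)"
  using MSE_MMSE_DR_eq_leakage_mse[OF model interference_power_nonneg] closed_forms(3)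
  by (simp add: one_minus_sin_sq add.commute)

lemma MSE_MMSE_DR_eq_MVDR_minus:
  "MSE_MMSE_DR h0 h1 s0 s1 c1 sn = MSE_MVDR h0 h1 s0 s1 c1 sn - \<bar>c1\<bar>\<^sup>2 * c\<^sup>2 / (s1 * c\<^sup>2 + sn)"
  unfolding MSE_MMSE_DR_closed_form MSE_MVDR_closed_form by (simp add: add_divide_distrib)

lemma MSE_MMSE_DR_eq_ZF_minus:
  "MSE_MMSE_DR h0 h1 s0 s1 c1 sn = MSE_ZF h0 h1 s0 s1 c1 sn - sn\<^sup>2 * (s / c)\<^sup>2 / (s1 * c\<^sup>2 + sn)"
  unfolding MSE_MMSE_DR_closed_form MSE_ZF_closed_form by (rule closed_forms(4))

text \<open>If delta = 0, the MVDR leakage K / D vanishes, and so does that of every RZF beamformer.\<close>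
lemma MSE_const_if_no_leakage:
  assumes "sn * (s / c) - c1 * c = 0" and "lam \<ge> 0"
  shows "MSE h0 h1 s0 s1 c1 sn lam = MSE_ZF h0 h1 s0 s1 c1 sn"
    and "MSE h0 h1 s0 s1 c1 sn lam = MSE_MVDR h0 h1 s0 s1 c1 sn"
proof -
  have "sn * s - c1 * c\<^sup>2 = c * (sn * (s / c) - c1 * c)"
    using cos_pos by (simp add: field_simps power2_eq_square)
  then have "sn * s - c1 * c\<^sup>2 = 0" using assms(1) by simp
  then show "MSE h0 h1 s0 s1 c1 sn lam = MSE_ZF h0 h1 s0 s1 c1 sn"
    and "MSE h0 h1 s0 s1 c1 sn lam = MSE_MVDR h0 h1 s0 s1 c1 sn"
    using MSE_eq[OF assms(2)] MSE_eq[of 0] MSE_ZF_eq_leakage_mse[OF model signal_psd]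
    by (simp_all add: MSE_MVDR_def w_MVDR_def MSE_def)
qed

lemma MSE_RZF_cases:
  assumes "sn * (s / c) - c1 * c \<noteq> 0"
  defines "\<gamma> \<equiv> sn * (s / c) / (sn * (s / c) - c1 * c)"
  shows "\<gamma> \<le> 0 \<Longrightarrow> MSE_RZF h0 h1 s0 s1 c1 sn = MSE_ZF h0 h1 s0 s1 c1 sn"
    and "0 < \<gamma> \<Longrightarrow> \<gamma> < 1 \<Longrightarrow> MSE_RZF h0 h1 s0 s1 c1 sn = MSE_MMSE_DR h0 h1 s0 s1 c1 sn"
    and "1 \<le> \<gamma> \<Longrightarrow> MSE_RZF h0 h1 s0 s1 c1 sn = MSE_MVDR h0 h1 s0 s1 c1 sn"
proof -
  have "MSE_RZF h0 h1 s0 s1 c1 sn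
      = (INF lam\<in>{0..}. leakage_mse s1 sn s ((sn * s - c1 * c\<^sup>2) / (sn + (s1 + lam) * c\<^sup>2)))"
    unfolding MSE_RZF_def using MSE_eq by (intro INF_cong) auto
  also have "\<dots> = (if \<gamma> \<le> 0 then MSE_ZF h0 h1 s0 s1 c1 sn
      else if \<gamma> < 1 then MSE_MMSE_DR h0 h1 s0 s1 c1 sn else MSE_MVDR h0 h1 s0 s1 c1 sn)"
    unfolding INF_leakage_mse_cases[OF sin_cos cos_pos noise_pos interference_power_nonneg assms(1)]
      \<gamma>_def[symmetric] MSE_ZF_closed_form MSE_MMSE_DR_closed_form MSE_MVDR_closed_form
    using closed_forms(1-3) by simp
  finally show "\<gamma> \<le> 0 \<Longrightarrow> MSE_RZF h0 h1 s0 s1 c1 sn = MSE_ZF h0 h1 s0 s1 c1 sn"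
    and "0 < \<gamma> \<Longrightarrow> \<gamma> < 1 \<Longrightarrow> MSE_RZF h0 h1 s0 s1 c1 sn = MSE_MMSE_DR h0 h1 s0 s1 c1 sn"
    and "1 \<le> \<gamma> \<Longrightarrow> MSE_RZF h0 h1 s0 s1 c1 sn = MSE_MVDR h0 h1 s0 s1 c1 sn"
    by simp_all
qed

end

theorem theorem2:
  fixes h0 h1 :: "real ^ 'n" and \<tau> \<sigma>0 \<sigma>1 \<sigma>n c1 :: real
  assumes "CARD('n) \<ge> 2"
    and "norm h0 = 1" and "norm h1 = 1" and "h0 \<bullet> h1 = sin \<tau>"
    and "- (pi / 2) < \<tau>" and "\<tau> < pi / 2"
    and "\<sigma>0 > 0" and "\<sigma>1 > 0" and "\<sigma>n > 0"
    and "- (\<sigma>0 * \<sigma>1) \<le> c1" and "c1 \<le> \<sigma>0 * \<sigma>1"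
  shows
   "let s0 = \<sigma>0\<^sup>2; s1 = \<sigma>1\<^sup>2; sn = \<sigma>n\<^sup>2;
        \<delta> = sn * tan \<tau> - c1 * cos \<tau>;
        D = s1 * (cos \<tau>)\<^sup>2 + sn;
        mvdr = MSE_MVDR h0 h1 s0 s1 c1 sn;
        zf = MSE_ZF h0 h1 s0 s1 c1 sn;
        dr = MSE_MMSE_DR h0 h1 s0 s1 c1 sn;
        rzf = MSE_RZF h0 h1 s0 s1 c1 sn
    in mvdr = (sn * (s1 + sn) + \<bar>c1\<bar>\<^sup>2 * (cos \<tau>)\<^sup>2) / D
     \<and> zf = sn * ((tan \<tau>)\<^sup>2 + 1)
     \<and> dr = sn * (s1 + sn) / D
     \<and> dr = mvdr - \<bar>c1\<bar>\<^sup>2 * (cos \<tau>)\<^sup>2 / D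
     \<and> dr = zf - sn\<^sup>2 * (tan \<tau>)\<^sup>2 / D
     \<and> (\<delta> = 0 \<longrightarrow> (\<forall>lam\<ge>0. MSE h0 h1 s0 s1 c1 sn lam = zf \<and> MSE h0 h1 s0 s1 c1 sn lam = mvdr))
     \<and> (\<delta> \<noteq> 0 \<longrightarrow>
          (let \<gamma> = sn * tan \<tau> / \<delta> in
             (\<gamma> \<le> 0 \<longrightarrow> rzf = zf)
           \<and> (0 < \<gamma> \<and> \<gamma> < 1 \<longrightarrow> rzf = dr)
           \<and> (\<gamma> \<ge> 1 \<longrightarrow> rzf = mvdr)))"
proof -
  have "\<bar>c1\<bar> \<le> \<sigma>0 * \<sigma>1" using assms(10,11) by simp
  then interpret single_interference h0 h1 "sin \<tau>" "cos \<tau>" "\<sigma>0\<^sup>2" "\<sigma>1\<^sup>2" c1 "\<sigma>n\<^sup>2"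
    using assms(2-6,9) by unfold_locales (simp_all add: norm_eq_1 cos_gt_zero_pi signal_covariance_psd)
  show ?thesis
    unfolding Let_def tan_def
    using MSE_MVDR_closed_form MSE_ZF_closed_form MSE_MMSE_DR_closed_form
      MSE_MMSE_DR_eq_MVDR_minus MSE_MMSE_DR_eq_ZF_minus MSE_const_if_no_leakage MSE_RZF_cases
    by blast
qed

end
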